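(* Let $M=V^TV$ be an $n\times n$ positive semidefinite matrix of rank $d$, where $V\in\mathbb{R}^{d\times n}$ has columns $v_1,\dots,v_n$, and let $1\le j\le d$. Let $\mu$ be the optimal value (infimum) of the program \[ \text{minimize } \Delta_j(W)\quad\text{s.t. } v_i^TWv_i\le 1\ \ \forall 1\le i\le n,\quad W\succ 0 \] over $d\times d$ symmetric matrices $W$. Then $\mathrm{msd}_j(M)\le e^{\mu}$.
   Context: For a $d\times d$ matrix $W\succ 0$, $\Delta_j(W)\coloneqq-\sum_{i=1}^j\ln\lambda_i$, where $\lambda_1\le\dots\le\lambda_d$ are the eigenvalues of $W$ (minus the sum of logarithms of the $j$ smallest eigenvalues). $\mathrm{msd}_j(M)\coloneqq\max\{\det(M_{S,S}): S\subseteq[n],\ |S|=j\}$. *)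

theory Defs
  imports "Jordan_Normal_Form.Char_Poly" "Jordan_Normal_Form.DL_Rank" "Jordan_Normal_Form.DL_Submatrix"
begin

definition eigvals_sorted :: "real mat \<Rightarrow> real list" where
  "eigvals_sorted W = sorted_list_of_multiset (proots (char_poly W))"

definition Delta :: "nat \<Rightarrow> real mat \<Rightarrow> real" where
  "Delta j W = - (\<Sum>i<j. ln (eigvals_sorted W ! i))"

definition pos_def :: "nat \<Rightarrow> real mat \<Rightarrow> bool" where
  "pos_def d W \<longleftrightarrow> W \<in> carrier_mat d d \<and> transpose_mat W = W \<and>
     (\<forall>x \<in> carrier_vec d. x \<noteq> 0\<^sub>v d \<longrightarrow> x \<bullet> (W *\<^sub>v x) > 0)"

definition msd :: "nat \<Rightarrow> real mat \<Rightarrow> real" where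
  "msd j M = Max {det (submatrix M S S) | S. S \<subseteq> {..<dim_row M} \<and> card S = j}"

end

theory Submission
  imports Defs
begin

text \<open>Diagonalise \<open>W = Q diag(\<mu>) Q\<^sup>T\<close>. For a \<open>j\<close>-subset \<open>S\<close> let \<open>B\<close> consist of the columns of \<open>V\<close>
  indexed by \<open>S\<close>, so that the principal minor is \<open>det (B\<^sup>T B)\<close>. Feasibility makes \<open>B\<^sup>T W B\<close> positive
  semidefinite with diagonal entries at most 1, hence \<open>det (B\<^sup>T W B) \<le> 1\<close> by AM--GM on its
  eigenvalues. On the other hand, with \<open>C = Q\<^sup>T B\<close> the Cauchy--Binet expansion gives
  \<open>det (B\<^sup>T W B) = \<Sum>\<^sub>T (\<Prod>\<^sub>t\<^sub>\<in>\<^sub>T \<mu> t) h\<^sub>T\<close> and \<open>det (B\<^sup>T B) = \<Sum>\<^sub>T h\<^sub>T\<close> with weights \<open>h\<^sub>T \<ge> 0\<close>, and each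
  product \<open>\<Prod>\<^sub>t\<^sub>\<in>\<^sub>T \<mu> t\<close> is at least the product \<open>exp (- \<Delta>\<^sub>j W)\<close> of the \<open>j\<close> smallest eigenvalues.
  Thus \<open>det (B\<^sup>T B) exp (- \<Delta>\<^sub>j W) \<le> 1\<close> for every feasible \<open>W\<close>.\<close>

lemma scalar_prod_self_pos:
  fixes w :: "real vec"
  assumes "w \<in> carrier_vec n" "w \<noteq> 0\<^sub>v n"
  shows "w \<bullet> w > 0"
proof -
  from assms obtain i where i: "i < n" "w $ i \<noteq> 0"
    by (metis eq_vecI carrier_vecD index_zero_vec(1,2))
  have "w \<bullet> w = (\<Sum>k\<in>{0..<n}. w $ k * w $ k)" using assms by (simp add: scalar_prod_def)
  also have "\<dots> > 0"
  proof (rule sum_pos2[of _ i])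
    show "w $ i * w $ i > 0" using i(2) by (metis not_real_square_gt_zero)
  qed (use i in auto)
  finally show ?thesis .
qed

lemma mult_mat_vec_unit_vec:
  fixes A :: "'a :: comm_semiring_1 mat"
  assumes "A \<in> carrier_mat nr n" and "i < n"
  shows "A *\<^sub>v unit_vec n i = col A i"
proof (rule eq_vecI)
  fix k assume "k < dim_vec (col A i)"
  then have "(A *\<^sub>v unit_vec n i) $ k = (\<Sum>l\<in>{0..<n}. A $$ (k,l) * (if l = i then 1 else 0))"
    using assms by (simp add: scalar_prod_def)
  also have "\<dots> = A $$ (k,i)" using assms by (simp add: if_distrib cong: if_cong)
  finally show "(A *\<^sub>v unit_vec n i) $ k = col A i $ k" using assms \<open>k < dim_vec (col A i)\<close> by simp
qed (use assms in auto)

lemma assoc_mult_mat_dim: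
  fixes A :: "'a :: semiring_0 mat"
  shows "dim_col A = dim_row B \<Longrightarrow> dim_col B = dim_row C \<Longrightarrow> A * B * C = A * (B * C)"
  by (rule assoc_mult_mat[of A "dim_row A" "dim_col A" B "dim_col B" C "dim_col C"]) auto

lemma index_mat_diag [simp]:
  "i < n \<Longrightarrow> j < n \<Longrightarrow> mat_diag n \<mu> $$ (i,j) = (if i = j then \<mu> i else 0)"
  "dim_row (mat_diag n \<mu>) = n" "dim_col (mat_diag n \<mu>) = n"
  unfolding mat_diag_def by auto

lemma upper_triangular_mat_diag [simp]: "upper_triangular (mat_diag n \<mu>)"
  unfolding upper_triangular_def by auto

lemma diag_mat_mat_diag [simp]: "diag_mat (mat_diag n \<mu>) = map \<mu> [0..<n]"
  unfolding diag_mat_def by auto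

lemma det_mat_diag: "det (mat_diag n \<mu>) = (\<Prod>i<n. \<mu> i)"
  using det_upper_triangular[of "mat_diag n \<mu>" n] by (simp add: prod.list_conv_set_nth atLeast0LessThan)

lemma char_poly_mat_diag: "char_poly (mat_diag n \<mu>) = (\<Prod>a\<leftarrow>map \<mu> [0..<n]. [:- a, 1:])"
  using char_poly_upper_triangular[of "mat_diag n \<mu>" n] by simp

lemma quad_form_mat_diag:
  fixes x :: "real vec"
  assumes "x \<in> carrier_vec n"
  shows "x \<bullet> (mat_diag n \<mu> *\<^sub>v x) = (\<Sum>r<n. \<mu> r * (x $ r)\<^sup>2)"
proof -
  have "(mat_diag n \<mu> *\<^sub>v x) $ r = \<mu> r * x $ r" if "r < n" for r
    using assms that by (simp add: mult_mat_vec_def scalar_prod_def if_distrib[of "\<lambda>c. c * _"] cong: if_cong)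
  then show ?thesis
    using assms by (auto simp: scalar_prod_def atLeast0LessThan power2_eq_square mult_ac intro!: sum.cong)
qed

section \<open>Spectral theorem for real symmetric matrices\<close>

lemma real_symmetric_complex_eigenvalue_real:
  fixes A :: "real mat"
  assumes A: "A \<in> carrier_mat n n" and sym: "transpose_mat A = A"
    and z: "z \<in> carrier_vec n" "z \<noteq> 0\<^sub>v n" and eq: "map_mat complex_of_real A *\<^sub>v z = a \<cdot>\<^sub>v z"
  shows "Im a = 0"
proof -
  have symA: "A $$ (i,k) = A $$ (k,i)" if "i < n" "k < n" for i k
    by (metis A carrier_matD(1,2) index_transpose_mat(1) sym that)
  have comp: "(\<Sum>k<n. complex_of_real (A $$ (i,k)) * z $ k) = a * z $ i" if "i < n" for i
  proof -
    have "(map_mat complex_of_real A *\<^sub>v z) $ i = (a \<cdot>\<^sub>v z) $ i" using eq by simp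
    then show ?thesis using that A z by (simp add: scalar_prod_def atLeast0LessThan)
  qed
  \<comment> \<open>the Hermitian form \<open>z\<^sup>* A z\<close> is real and equals \<open>a |z|\<^sup>2\<close>\<close>
  define S where "S = (\<Sum>i<n. cnj (z $ i) * (\<Sum>k<n. complex_of_real (A $$ (i,k)) * z $ k))"
  define N where "N = (\<Sum>i<n. (cmod (z $ i))\<^sup>2)"
  have "S = (\<Sum>i<n. cnj (z $ i) * (a * z $ i))"
    unfolding S_def by (rule sum.cong) (auto simp: comp)
  also have "\<dots> = a * (\<Sum>i<n. cnj (z $ i) * z $ i)"
    by (simp add: sum_distrib_left mult_ac)
  also have "(\<Sum>i<n. cnj (z $ i) * z $ i) = complex_of_real N"
    unfolding N_def of_real_sum by (rule sum.cong) (simp, metis complex_norm_square mult.commute)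
  finally have S_eq: "S = a * complex_of_real N" .
  have "cnj S = (\<Sum>i<n. \<Sum>k<n. complex_of_real (A $$ (i,k)) * z $ i * cnj (z $ k))"
    unfolding S_def by (simp add: sum_distrib_left mult_ac)
  also have "\<dots> = (\<Sum>k<n. \<Sum>i<n. complex_of_real (A $$ (i,k)) * z $ i * cnj (z $ k))"
    by (rule sum.swap)
  also have "\<dots> = S"
    unfolding S_def sum_distrib_left by (intro sum.cong refl) (auto simp: symA mult_ac)
  finally have "cnj S = S" .
  then have "Im S = 0" by (metis Reals_cnj_iff complex_is_Real_iff)
  moreover obtain i0 where "i0 < n" "z $ i0 \<noteq> 0"
    using z by (metis eq_vecI carrier_vecD index_zero_vec(1,2))
  then have "N > 0" unfolding N_def by (intro sum_pos2[of _ i0]) auto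
  ultimately show ?thesis unfolding S_eq by simp
qed

lemma real_eigenvector_of_complex:
  fixes A :: "real mat"
  assumes A: "A \<in> carrier_mat n n"
    and z: "z \<in> carrier_vec n" "z \<noteq> 0\<^sub>v n"
    and eq: "map_mat complex_of_real A *\<^sub>v z = complex_of_real r \<cdot>\<^sub>v z"
  obtains w where "w \<in> carrier_vec n" "w \<noteq> 0\<^sub>v n" "A *\<^sub>v w = r \<cdot>\<^sub>v w"
proof -
  obtain i0 where i0: "i0 < n" "z $ i0 \<noteq> 0"
    using z by (metis eq_vecI carrier_vecD index_zero_vec(1,2))
  have comp: "(\<Sum>k<n. complex_of_real (A $$ (i,k)) * z $ k) = r * z $ i" if "i < n" for i
  proof -
    have "(map_mat complex_of_real A *\<^sub>v z) $ i = (complex_of_real r \<cdot>\<^sub>v z) $ i" using eq by simp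
    then show ?thesis using that A z by (simp add: scalar_prod_def atLeast0LessThan)
  qed
  \<comment> \<open>both the real and the imaginary part of \<open>z\<close> solve the real system; one of them is nonzero\<close>
  have part: "A *\<^sub>v vec n (\<lambda>k. f (z $ k)) = r \<cdot>\<^sub>v vec n (\<lambda>k. f (z $ k))"
    if f: "f = Re \<or> f = Im" for f
  proof (rule eq_vecI)
    fix i assume "i < dim_vec (r \<cdot>\<^sub>v vec n (\<lambda>k. f (z $ k)))"
    then have i: "i < n" by simp
    have "f (\<Sum>k<n. complex_of_real (A $$ (i,k)) * z $ k) = f (r * z $ i)" using comp[OF i] by simp
    then have "(\<Sum>k<n. A $$ (i,k) * f (z $ k)) = r * f (z $ i)"
      using f by (auto simp: Re_sum Im_sum)
    then show "(A *\<^sub>v vec n (\<lambda>k. f (z $ k))) $ i = (r \<cdot>\<^sub>v vec n (\<lambda>k. f (z $ k))) $ i"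
      using A i by (simp add: scalar_prod_def atLeast0LessThan)
  qed (use A in simp)
  show ?thesis
  proof (cases "Re (z $ i0) = 0")
    case False
    then have "vec n (\<lambda>k. Re (z $ k)) \<noteq> 0\<^sub>v n" using i0 by (metis index_vec index_zero_vec(1))
    then show ?thesis by (intro that[of "vec n (\<lambda>k. Re (z $ k))"] part) auto
  next
    case True
    then have "vec n (\<lambda>k. Im (z $ k)) \<noteq> 0\<^sub>v n"
      using i0 by (metis complex_eq_iff index_vec index_zero_vec(1) zero_complex.simps)
    then show ?thesis by (intro that[of "vec n (\<lambda>k. Im (z $ k))"] part) auto
  qed
qed

lemma real_symmetric_unit_eigenvector:
  fixes A :: "real mat"
  assumes A: "A \<in> carrier_mat n n" and sym: "transpose_mat A = A" and n: "n > 0"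
  obtains l v where "v \<in> carrier_vec n" "v \<bullet> v = 1" "A *\<^sub>v v = l \<cdot>\<^sub>v v"
proof -
  let ?Ac = "map_mat complex_of_real A"
  have Ac: "?Ac \<in> carrier_mat n n" using A by simp
  from char_poly_factorized[OF Ac] obtain as where
    cp: "char_poly ?Ac = (\<Prod>a\<leftarrow>as. [:- a, 1:])" and len: "length as = n" by blast
  from len n obtain a as' where as: "as = a # as'" by (cases as) auto
  have "eigenvalue ?Ac a"
    using eigenvalue_root_char_poly[OF Ac] unfolding cp as by simp
  then obtain z where z: "z \<in> carrier_vec n" "z \<noteq> 0\<^sub>v n" and eq: "?Ac *\<^sub>v z = a \<cdot>\<^sub>v z"
    unfolding eigenvalue_def eigenvector_def using A by auto
  have "a = complex_of_real (Re a)"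
    using real_symmetric_complex_eigenvalue_real[OF A sym z eq] by (simp add: complex_eq_iff)
  then obtain w where w: "w \<in> carrier_vec n" "w \<noteq> 0\<^sub>v n" "A *\<^sub>v w = Re a \<cdot>\<^sub>v w"
    using real_eigenvector_of_complex[OF A z] eq by metis
  have wpos: "w \<bullet> w > 0" using scalar_prod_self_pos[OF w(1,2)] .
  define v where "v = (1 / sqrt (w \<bullet> w)) \<cdot>\<^sub>v w"
  show ?thesis
  proof (rule that[of v "Re a"])
    show "v \<in> carrier_vec n" unfolding v_def using w by simp
    show "v \<bullet> v = 1" unfolding v_def using w wpos
      by (simp add: scalar_prod_smult_distrib)
    show "A *\<^sub>v v = Re a \<cdot>\<^sub>v v" unfolding v_def using w A
      by (simp add: mult_mat_vec smult_smult_assoc mult.commute)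
  qed
qed

lemma householder_reflection:
  fixes v :: "real vec"
  assumes v: "v \<in> carrier_vec n" "v \<bullet> v = 1" and n: "n > 0"
  obtains H where "H \<in> carrier_mat n n" "transpose_mat H = H" "H * H = 1\<^sub>m n" "col H 0 = v"
proof (cases "v = unit_vec n 0")
  case True
  then show ?thesis using n by (intro that[of "1\<^sub>m n"]) auto
next
  case False
  \<comment> \<open>reflection in the hyperplane orthogonal to \<open>w = v - e\<^sub>0\<close>, which swaps \<open>e\<^sub>0\<close> and \<open>v\<close>\<close>
  define w where "w = v - unit_vec n 0"
  have w: "w \<in> carrier_vec n" unfolding w_def using v by simp
  have wi: "w $ i = v $ i - (if i = 0 then 1 else 0)" if "i < n" for i
    unfolding w_def using v that by auto
  have w0: "w \<noteq> 0\<^sub>v n"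
  proof
    assume "w = 0\<^sub>v n"
    then have "v = unit_vec n 0" using v wi by (intro eq_vecI) (auto simp: unit_vec_def)
    then show False using False by simp
  qed
  define W2 where "W2 = (\<Sum>k<n. w $ k * w $ k)"
  have W2pos: "W2 > 0"
    using scalar_prod_self_pos[OF w w0] w unfolding W2_def by (simp add: scalar_prod_def atLeast0LessThan)
  have vv: "(\<Sum>k<n. v $ k * v $ k) = 1" using v by (simp add: scalar_prod_def atLeast0LessThan)
  have "W2 = (\<Sum>k<n. v $ k * v $ k - (if k = 0 then 2 * v $ 0 - 1 else 0))"
    unfolding W2_def by (rule sum.cong) (auto simp: wi algebra_simps)
  also have "\<dots> = 2 - 2 * v $ 0" using n by (simp add: sum_subtractf vv)
  finally have W2v: "W2 = - 2 * w $ 0" using wi[OF n] by simp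
  define c where "c = 2 / W2"
  have cW2: "c * W2 = 2" and cw0: "c * w $ 0 = -1"
    unfolding c_def using W2pos W2v by (auto simp: field_simps)
  define H where "H = mat n n (\<lambda>(i,j). (if i = j then 1 else 0) - c * w $ i * w $ j)"
  have H: "H \<in> carrier_mat n n" unfolding H_def by simp
  show ?thesis
  proof (rule that[OF H])
    show "transpose_mat H = H" unfolding H_def by (rule eq_matI) auto
    show "col H 0 = v"
    proof (rule eq_vecI)
      fix i assume "i < dim_vec v"
      then have i: "i < n" using v by simp
      have "col H 0 $ i = (if i = 0 then 1 else 0) - (c * w $ 0) * w $ i"
        unfolding H_def using i n by simp
      also have "\<dots> = v $ i" unfolding cw0 using wi[OF i] by simp
      finally show "col H 0 $ i = v $ i" .
    qed (use v H in auto)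
    show "H * H = 1\<^sub>m n"
    proof (rule eq_matI)
      fix i j assume "i < dim_row (1\<^sub>m n)" "j < dim_col (1\<^sub>m n)"
      then have i: "i < n" and j: "j < n" by auto
      have "(H * H) $$ (i,j) = (\<Sum>k<n. ((if i = k then 1 else 0) - c * w $ i * w $ k)
          * ((if k = j then 1 else 0) - c * w $ k * w $ j))"
        using i j unfolding H_def by (simp add: scalar_prod_def atLeast0LessThan)
      also have "\<dots> = (\<Sum>k<n. (if k = i then (if i = j then 1 else 0) else 0)
          - (if k = j then c * w $ i * w $ k else 0) - (if k = i then c * w $ k * w $ j else 0)
          + (c * c * w $ i * w $ j) * (w $ k * w $ k))"
        by (rule sum.cong) (auto simp: algebra_simps)
      also have "\<dots> = (if i = j then 1 else 0) - 2 * c * w $ i * w $ j + (c * c * w $ i * w $ j) * W2"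
        using i j unfolding W2_def by (simp add: sum.distrib sum_subtractf sum_distrib_left[symmetric])
      also have "\<dots> = (if i = j then 1 else 0)" using cW2 by (simp add: algebra_simps)
      finally show "(H * H) $$ (i,j) = 1\<^sub>m n $$ (i,j)" using i j by simp
    qed (use H in auto)
  qed
qed

definition orthogonally_diagonalizes :: "nat \<Rightarrow> real mat \<Rightarrow> (nat \<Rightarrow> real) \<Rightarrow> real mat \<Rightarrow> bool" where
  "orthogonally_diagonalizes n Q \<mu> A \<longleftrightarrow> Q \<in> carrier_mat n n \<and> transpose_mat Q * Q = 1\<^sub>m n
     \<and> Q * transpose_mat Q = 1\<^sub>m n \<and> A = Q * mat_diag n \<mu> * transpose_mat Q"

lemma orthogonally_diagonalizes_reflection:
  assumes A: "A \<in> carrier_mat n n" and H: "H \<in> carrier_mat n n" "transpose_mat H = H" "H * H = 1\<^sub>m n"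
    and QHAH: "orthogonally_diagonalizes n Q \<mu> (H * A * H)"
  shows "orthogonally_diagonalizes n (H * Q) \<mu> A"
proof -
  have Q: "Q \<in> carrier_mat n n" and QQ: "transpose_mat Q * Q = 1\<^sub>m n"
    and HAH: "H * A * H = Q * mat_diag n \<mu> * transpose_mat Q"
    using QHAH unfolding orthogonally_diagonalizes_def by auto
  have tHQ: "transpose_mat (H * Q) = transpose_mat Q * H"
    using transpose_mult[OF H(1) Q] H(2) by simp
  have "transpose_mat (H * Q) * (H * Q) = transpose_mat Q * (H * (H * Q))"
    unfolding tHQ using H Q by (simp add: assoc_mult_mat_dim)
  also have "H * (H * Q) = (H * H) * Q" by (rule assoc_mult_mat[symmetric, OF H(1) H(1) Q])
  finally have orth: "transpose_mat (H * Q) * (H * Q) = 1\<^sub>m n" using H Q QQ by simp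
  have "A = (H * H) * A * (H * H)" unfolding H(3) using A by simp
  also have "\<dots> = H * (H * A * H) * H" using A H(1) by (simp add: assoc_mult_mat_dim)
  also have "\<dots> = H * Q * mat_diag n \<mu> * transpose_mat (H * Q)"
    unfolding HAH tHQ using H Q by (simp add: assoc_mult_mat_dim)
  finally show ?thesis
    unfolding orthogonally_diagonalizes_def using orth H Q
    by (auto intro: mat_mult_left_right_inverse)
qed

lemma reflection_block_form:
  fixes A :: "real mat"
  assumes A: "A \<in> carrier_mat (Suc m) (Suc m)" "transpose_mat A = A"
    and H: "H \<in> carrier_mat (Suc m) (Suc m)" "transpose_mat H = H" "H * H = 1\<^sub>m (Suc m)"
    and v: "col H 0 = v" "v \<in> carrier_vec (Suc m)" "A *\<^sub>v v = l \<cdot>\<^sub>v v"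
  obtains A' where "A' \<in> carrier_mat m m" "transpose_mat A' = A'"
    "H * A * H = four_block_mat (mat 1 1 (\<lambda>_. l)) (0\<^sub>m 1 m) (0\<^sub>m m 1) A'"
proof -
  let ?n = "Suc m" and ?e = "unit_vec (Suc m) 0 :: real vec"
  define B where "B = H * A * H"
  have B: "B \<in> carrier_mat ?n ?n" unfolding B_def using H A by simp
  have He: "H *\<^sub>v ?e = v" using mult_mat_vec_unit_vec[OF H(1)] v by simp
  have Hv: "H *\<^sub>v v = ?e" unfolding He[symmetric] using H
    by (simp add: assoc_mult_mat_vec[symmetric, of _ ?n ?n _ ?n])
  have Bsym: "B $$ (i,k) = B $$ (k,i)" if "i < ?n" "k < ?n" for i k
  proof -
    have "transpose_mat B = transpose_mat H * (transpose_mat A * transpose_mat H)"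
      unfolding B_def using H A by (simp add: transpose_mult[of _ ?n ?n _ ?n])
    also have "\<dots> = B" unfolding B_def A(2) H(2) using H A by simp
    finally show ?thesis by (metis B carrier_matD(1,2) index_transpose_mat(1) that)
  qed
  have "B *\<^sub>v ?e = H *\<^sub>v (A *\<^sub>v (H *\<^sub>v ?e))" unfolding B_def using H A
    by (simp add: assoc_mult_mat_vec[of _ ?n ?n _ ?n])
  also have "\<dots> = l \<cdot>\<^sub>v ?e" unfolding He v(3) using H v Hv by (simp add: mult_mat_vec)
  finally have Be: "B *\<^sub>v ?e = l \<cdot>\<^sub>v ?e" .
  have Bcol: "B $$ (i,0) = (if i = 0 then l else 0)" if "i < ?n" for i
    using arg_cong[OF Be, of "\<lambda>x. x $ i"] mult_mat_vec_unit_vec[OF B, of 0] B that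
    by (cases "i = 0") auto
  define A' where "A' = mat m m (\<lambda>(i,j). B $$ (Suc i, Suc j))"
  show ?thesis
  proof (rule that)
    show "A' \<in> carrier_mat m m" unfolding A'_def by simp
    show "transpose_mat A' = A'" unfolding A'_def by (rule eq_matI) (auto intro: Bsym)
    show "H * A * H = four_block_mat (mat 1 1 (\<lambda>_. l)) (0\<^sub>m 1 m) (0\<^sub>m m 1) A'"
      unfolding B_def[symmetric]
    proof (rule eq_matI)
      fix i j assume "i < dim_row (four_block_mat (mat 1 1 (\<lambda>_. l)) (0\<^sub>m 1 m) (0\<^sub>m m 1) A')"
        "j < dim_col (four_block_mat (mat 1 1 (\<lambda>_. l)) (0\<^sub>m 1 m) (0\<^sub>m m 1) A')"
      then have i: "i < ?n" and j: "j < ?n" unfolding A'_def by auto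
      show "B $$ (i,j) = four_block_mat (mat 1 1 (\<lambda>_. l)) (0\<^sub>m 1 m) (0\<^sub>m m 1) A' $$ (i,j)"
      proof (cases "j = 0")
        case True then show ?thesis using i Bcol unfolding A'_def by auto
      next
        case False
        then show ?thesis using i j Bcol Bsym[OF i j] unfolding A'_def
          by (cases i; cases j) auto
      qed
    qed (use B in \<open>auto simp: A'_def\<close>)
  qed
qed

lemma orthogonally_diagonalizes_four_block:
  assumes "orthogonally_diagonalizes m Q' \<mu>' A'"
  shows "orthogonally_diagonalizes (Suc m) (four_block_mat (1\<^sub>m 1) (0\<^sub>m 1 m) (0\<^sub>m m 1) Q')
    (\<lambda>i. if i = 0 then l else \<mu>' (i - 1)) (four_block_mat (mat 1 1 (\<lambda>_. l)) (0\<^sub>m 1 m) (0\<^sub>m m 1) A')"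
proof -
  have Q': "Q' \<in> carrier_mat m m" and Q'Q': "transpose_mat Q' * Q' = 1\<^sub>m m"
    and A': "A' = Q' * mat_diag m \<mu>' * transpose_mat Q'"
    using assms unfolding orthogonally_diagonalizes_def by auto
  define Q where "Q = four_block_mat (1\<^sub>m 1) (0\<^sub>m 1 m) (0\<^sub>m m 1) Q'"
  define \<mu> where "\<mu> = (\<lambda>i. if i = 0 then l else \<mu>' (i - 1))"
  let ?L = "mat 1 1 (\<lambda>_. l) :: real mat"
  have L: "?L \<in> carrier_mat 1 1" by simp
  have Q: "Q \<in> carrier_mat (Suc m) (Suc m)" unfolding Q_def using Q' by auto
  have tQ: "transpose_mat Q = four_block_mat (1\<^sub>m 1) (0\<^sub>m 1 m) (0\<^sub>m m 1) (transpose_mat Q')"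
    unfolding Q_def using Q' by (subst transpose_four_block_mat[of _ 1 1 _ m _ m]) auto
  have D: "mat_diag (Suc m) \<mu> = four_block_mat ?L (0\<^sub>m 1 m) (0\<^sub>m m 1) (mat_diag m \<mu>')"
    unfolding \<mu>_def by (rule eq_matI) auto
  have "transpose_mat Q * Q = four_block_mat (1\<^sub>m 1) (0\<^sub>m 1 m) (0\<^sub>m m 1) (transpose_mat Q' * Q')"
    unfolding tQ unfolding Q_def
    by (subst mult_four_block_mat[OF one_carrier_mat zero_carrier_mat zero_carrier_mat _
          one_carrier_mat zero_carrier_mat zero_carrier_mat Q']) (use Q' in auto)
  then have QQ: "transpose_mat Q * Q = 1\<^sub>m (Suc m)" unfolding Q'Q' by simp
  have "Q * mat_diag (Suc m) \<mu> = four_block_mat ?L (0\<^sub>m 1 m) (0\<^sub>m m 1) (Q' * mat_diag m \<mu>')"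
    unfolding Q_def D
    by (subst mult_four_block_mat[OF one_carrier_mat zero_carrier_mat zero_carrier_mat Q' L
          zero_carrier_mat zero_carrier_mat mat_diag_dim])
      (use Q' in \<open>auto simp: left_mult_zero_mat[OF mat_diag_dim]\<close>)
  also have "\<dots> * transpose_mat Q =
      four_block_mat ?L (0\<^sub>m 1 m) (0\<^sub>m m 1) (Q' * mat_diag m \<mu>' * transpose_mat Q')"
    unfolding tQ
    by (subst mult_four_block_mat[OF L zero_carrier_mat zero_carrier_mat _ one_carrier_mat
          zero_carrier_mat zero_carrier_mat])
      (use Q' in \<open>auto simp: right_mult_zero_mat[of "Q' * mat_diag m \<mu>'" m m]
        left_add_zero_mat[of "Q' * mat_diag m \<mu>' * transpose_mat Q'" m m]\<close>)
  finally have "four_block_mat ?L (0\<^sub>m 1 m) (0\<^sub>m m 1) A' = Q * mat_diag (Suc m) \<mu> * transpose_mat Q"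
    unfolding A' by simp
  then show ?thesis
    unfolding orthogonally_diagonalizes_def Q_def[symmetric] \<mu>_def[symmetric]
    using Q QQ by (auto intro: mat_mult_left_right_inverse)
qed

theorem real_symmetric_orthogonally_diagonalizable:
  fixes A :: "real mat"
  assumes "A \<in> carrier_mat n n" and "transpose_mat A = A"
  obtains Q \<mu> where "orthogonally_diagonalizes n Q \<mu> A"
  using assms
proof (induction n arbitrary: A thesis)
  case 0
  then show ?case
    by (intro "0.prems"(1)[of "1\<^sub>m 0" "\<lambda>_. 0"])
      (auto simp: orthogonally_diagonalizes_def intro!: eq_matI)
next
  case (Suc m)
  obtain l v where v: "v \<in> carrier_vec (Suc m)" "v \<bullet> v = 1" "A *\<^sub>v v = l \<cdot>\<^sub>v v"
    using real_symmetric_unit_eigenvector[OF Suc.prems(2,3)] by blast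
  obtain H where H: "H \<in> carrier_mat (Suc m) (Suc m)" "transpose_mat H = H" "H * H = 1\<^sub>m (Suc m)"
    "col H 0 = v"
    using householder_reflection[OF v(1,2)] by blast
  obtain A' where A': "A' \<in> carrier_mat m m" "transpose_mat A' = A'"
    and HAH: "H * A * H = four_block_mat (mat 1 1 (\<lambda>_. l)) (0\<^sub>m 1 m) (0\<^sub>m m 1) A'"
    using reflection_block_form[OF Suc.prems(2,3) H v(1,3)] by blast
  obtain Q' \<mu>' where "orthogonally_diagonalizes m Q' \<mu>' A'"
    using Suc.IH[OF _ A'] by blast
  then obtain Q \<mu> where "orthogonally_diagonalizes (Suc m) Q \<mu> (H * A * H)"
    unfolding HAH by (metis orthogonally_diagonalizes_four_block)
  then show ?case
    by (rule Suc.prems(1)[OF orthogonally_diagonalizes_reflection[OF Suc.prems(2) H(1-3)]])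
qed

lemma orthogonally_diagonalizes_diag:
  assumes "orthogonally_diagonalizes n Q \<mu> A" and "A \<in> carrier_mat n n"
  shows "transpose_mat Q * A * Q = mat_diag n \<mu>"
proof -
  have Q: "Q \<in> carrier_mat n n" and QQ: "transpose_mat Q * Q = 1\<^sub>m n"
    and AQ: "A = Q * mat_diag n \<mu> * transpose_mat Q"
    using assms unfolding orthogonally_diagonalizes_def by auto
  have "transpose_mat Q * A * Q = (transpose_mat Q * Q) * mat_diag n \<mu> * (transpose_mat Q * Q)"
    unfolding AQ using Q by (simp add: assoc_mult_mat_dim)
  then show ?thesis unfolding QQ by simp
qed

lemma orthogonally_diagonalizes_eigenvalue:
  assumes "orthogonally_diagonalizes n Q \<mu> A" and A: "A \<in> carrier_mat n n" and i: "i < n"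
  shows "\<mu> i = col Q i \<bullet> (A *\<^sub>v col Q i)" and "col Q i \<bullet> col Q i = 1"
proof -
  have Q: "Q \<in> carrier_mat n n" and QQ: "transpose_mat Q * Q = 1\<^sub>m n"
    using assms unfolding orthogonally_diagonalizes_def by auto
  have "\<mu> i = (transpose_mat Q * A * Q) $$ (i,i)"
    unfolding orthogonally_diagonalizes_diag[OF assms(1,2)] using i by simp
  then show "\<mu> i = col Q i \<bullet> (A *\<^sub>v col Q i)"
    using A Q i by (simp add: assoc_mult_mat_dim mult_mat_vec_def)
  show "col Q i \<bullet> col Q i = 1"
    using arg_cong[OF QQ, of "\<lambda>M. M $$ (i,i)"] Q i by simp
qed

lemma proots_prod_list_linear: "proots (\<Prod>a\<leftarrow>xs. [:- a, 1:]) = mset (xs :: real list)"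
proof (induction xs)
  case (Cons x xs)
  have "(\<Prod>a\<leftarrow>xs. [:- a, 1:]) \<noteq> 0" by (auto simp: prod_list_zero_iff)
  then have "proots ([:- x, 1:] * (\<Prod>a\<leftarrow>xs. [:- a, 1:]))
      = proots [:- x, 1:] + proots (\<Prod>a\<leftarrow>xs. [:- a, 1:])"
    by (intro proots_mult) auto
  moreover have "proots [:- x, 1:] = {#x#}" using proots_linear_factor[of "-x"] by simp
  ultimately show ?case using Cons by simp
qed simp

lemma eigvals_sorted_orthogonally_diagonalizes:
  assumes "orthogonally_diagonalizes n Q \<mu> A" and "A \<in> carrier_mat n n"
  shows "eigvals_sorted A = sort (map \<mu> [0..<n])"
proof -
  have "similar_mat_wit A (mat_diag n \<mu>) Q (transpose_mat Q)"
    using assms unfolding orthogonally_diagonalizes_def similar_mat_wit_def Let_def by auto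
  then have "char_poly A = char_poly (mat_diag n \<mu>)"
    using char_poly_similar unfolding similar_mat_def by blast
  then have "proots (char_poly A) = mset (map \<mu> [0..<n])"
    unfolding char_poly_mat_diag by (rule ssubst) (rule proots_prod_list_linear)
  then show ?thesis
    unfolding eigvals_sorted_def by (simp only: sorted_list_of_multiset_mset)
qed

lemma det_orthogonally_diagonalizes:
  assumes "orthogonally_diagonalizes n Q \<mu> A"
  shows "det A = (\<Prod>i<n. \<mu> i)"
proof -
  have Q: "Q \<in> carrier_mat n n" and QQ: "Q * transpose_mat Q = 1\<^sub>m n"
    and AQ: "A = Q * mat_diag n \<mu> * transpose_mat Q"
    using assms unfolding orthogonally_diagonalizes_def by auto
  have "det A = det (mat_diag n \<mu>) * det (Q * transpose_mat Q)"
    unfolding AQ using Q by (simp add: det_mult[of _ n])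
  then show ?thesis unfolding QQ det_mat_diag by simp
qed

section \<open>Positive semidefinite matrices\<close>

definition pos_semidef :: "nat \<Rightarrow> real mat \<Rightarrow> bool" where
  "pos_semidef n A \<longleftrightarrow> A \<in> carrier_mat n n \<and> transpose_mat A = A \<and>
     (\<forall>x \<in> carrier_vec n. x \<bullet> (A *\<^sub>v x) \<ge> 0)"

lemma pos_def_imp_pos_semidef:
  assumes "pos_def n A"
  shows "pos_semidef n A"
proof -
  have "x \<bullet> (A *\<^sub>v x) \<ge> 0" if "x \<in> carrier_vec n" for x
    using assms that unfolding pos_def_def by (cases "x = 0\<^sub>v n") (auto intro: less_imp_le)
  then show ?thesis using assms unfolding pos_semidef_def pos_def_def by auto
qed

lemma pos_semidef_mat_diag:
  assumes "\<And>i. i < n \<Longrightarrow> \<mu> i \<ge> 0"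
  shows "pos_semidef n (mat_diag n \<mu>)"
  unfolding pos_semidef_def using assms by (auto simp: quad_form_mat_diag intro!: sum_nonneg)

lemma quad_form_congruence:
  fixes B A :: "real mat"
  assumes B: "B \<in> carrier_mat d j" and A: "A \<in> carrier_mat d d" and x: "x \<in> carrier_vec j"
  shows "x \<bullet> ((transpose_mat B * A * B) *\<^sub>v x) = (B *\<^sub>v x) \<bullet> (A *\<^sub>v (B *\<^sub>v x))"
proof -
  have "(transpose_mat B * A * B) *\<^sub>v x = transpose_mat B *\<^sub>v (A *\<^sub>v (B *\<^sub>v x))"
    using A B x by (simp add: assoc_mult_mat_vec[of _ j d _ d] assoc_mult_mat_vec[of _ j d _ j])
  then have "x \<bullet> ((transpose_mat B * A * B) *\<^sub>v x) = (transpose_mat B *\<^sub>v (A *\<^sub>v (B *\<^sub>v x))) \<bullet> x"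
    using A B x by (simp add: comm_scalar_prod[of _ j])
  also have "\<dots> = (A *\<^sub>v (B *\<^sub>v x)) \<bullet> (B *\<^sub>v x)"
    using transpose_vec_mult_scalar[OF B x, of "A *\<^sub>v (B *\<^sub>v x)"] A B x by simp
  also have "\<dots> = (B *\<^sub>v x) \<bullet> (A *\<^sub>v (B *\<^sub>v x))" using A B x by (simp add: comm_scalar_prod[of _ d])
  finally show ?thesis .
qed

lemma pos_semidef_congruence:
  assumes A: "pos_semidef d A" and B: "B \<in> carrier_mat d j"
  shows "pos_semidef j (transpose_mat B * A * B)"
proof -
  have Ac: "A \<in> carrier_mat d d" and symA: "transpose_mat A = A"
    and psd: "\<And>y. y \<in> carrier_vec d \<Longrightarrow> y \<bullet> (A *\<^sub>v y) \<ge> 0"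
    using A unfolding pos_semidef_def by auto
  have tB: "transpose_mat B \<in> carrier_mat j d" using B by simp
  have "transpose_mat (transpose_mat B * A * B) = transpose_mat B * transpose_mat (transpose_mat B * A)"
    by (rule transpose_mult[OF mult_carrier_mat[OF tB Ac] B])
  also have "transpose_mat (transpose_mat B * A) = A * B"
    using transpose_mult[OF tB Ac] symA by simp
  also have "transpose_mat B * (A * B) = transpose_mat B * A * B"
    by (rule assoc_mult_mat[symmetric, OF tB Ac B])
  finally have "transpose_mat (transpose_mat B * A * B) = transpose_mat B * A * B" .
  moreover have "x \<bullet> ((transpose_mat B * A * B) *\<^sub>v x) \<ge> 0" if "x \<in> carrier_vec j" for x
    unfolding quad_form_congruence[OF B Ac that] using psd B that by simp
  ultimately show ?thesis unfolding pos_semidef_def using Ac B by auto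
qed

lemma pos_semidef_eigenvalues_nonneg:
  assumes "pos_semidef n A" and "orthogonally_diagonalizes n Q \<mu> A" and "i < n"
  shows "\<mu> i \<ge> 0"
  using assms orthogonally_diagonalizes_eigenvalue[OF assms(2) _ assms(3)]
  unfolding pos_semidef_def orthogonally_diagonalizes_def by auto

lemma pos_def_eigenvalues_pos:
  assumes "pos_def n A" and "orthogonally_diagonalizes n Q \<mu> A" and "i < n"
  shows "\<mu> i > 0"
proof -
  have A: "A \<in> carrier_mat n n" and Q: "Q \<in> carrier_mat n n"
    using assms unfolding pos_def_def orthogonally_diagonalizes_def by auto
  note ev = orthogonally_diagonalizes_eigenvalue[OF assms(2) A assms(3)]
  have "col Q i \<noteq> 0\<^sub>v n" using ev(2) by auto
  then show ?thesis using assms(1) Q assms(3) unfolding ev(1) pos_def_def by auto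
qed

lemma pos_semidef_det_nonneg:
  assumes "pos_semidef n A"
  shows "det A \<ge> 0"
proof -
  obtain Q \<mu> where Q: "orthogonally_diagonalizes n Q \<mu> A"
    using real_symmetric_orthogonally_diagonalizable assms unfolding pos_semidef_def by blast
  then show ?thesis
    unfolding det_orthogonally_diagonalizes[OF Q]
    by (intro prod_nonneg) (auto intro: pos_semidef_eigenvalues_nonneg[OF assms Q])
qed

definition mat_trace :: "'a :: comm_ring mat \<Rightarrow> 'a" where
  "mat_trace A = (\<Sum>i<dim_row A. A $$ (i,i))"

lemma mat_trace_mult_comm:
  fixes X Y :: "'a :: comm_ring mat"
  assumes X: "X \<in> carrier_mat m n" and Y: "Y \<in> carrier_mat n m"
  shows "mat_trace (X * Y) = mat_trace (Y * X)"
proof -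
  have "mat_trace (X * Y) = (\<Sum>i<m. \<Sum>k<n. X $$ (i,k) * Y $$ (k,i))"
    unfolding mat_trace_def using X Y by (auto simp: scalar_prod_def atLeast0LessThan intro!: sum.cong)
  also have "\<dots> = (\<Sum>k<n. \<Sum>i<m. Y $$ (k,i) * X $$ (i,k))" by (subst sum.swap) (simp add: mult.commute)
  also have "\<dots> = mat_trace (Y * X)"
    unfolding mat_trace_def using X Y by (auto simp: scalar_prod_def atLeast0LessThan intro!: sum.cong)
  finally show ?thesis .
qed

lemma pos_semidef_det_le_one:
  assumes G: "pos_semidef n G" and diag: "\<And>k. k < n \<Longrightarrow> G $$ (k,k) \<le> 1"
  shows "det G \<le> 1"
proof -
  have Gc: "G \<in> carrier_mat n n" using G unfolding pos_semidef_def by auto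
  obtain Q \<mu> where Q\<mu>: "orthogonally_diagonalizes n Q \<mu> G"
    using real_symmetric_orthogonally_diagonalizable G unfolding pos_semidef_def by blast
  then have Q: "Q \<in> carrier_mat n n" and QQ: "Q * transpose_mat Q = 1\<^sub>m n"
    unfolding orthogonally_diagonalizes_def by auto
  have tQ: "transpose_mat Q \<in> carrier_mat n n" using Q by simp
  have "(\<Sum>i<n. \<mu> i) = mat_trace (transpose_mat Q * G * Q)"
    unfolding orthogonally_diagonalizes_diag[OF Q\<mu> Gc] mat_trace_def by simp
  also have "\<dots> = mat_trace (Q * (transpose_mat Q * G))"
    by (rule mat_trace_mult_comm[OF mult_carrier_mat[OF tQ Gc] Q])
  also have "\<dots> = mat_trace G" using Q tQ Gc by (simp add: assoc_mult_mat_dim[symmetric] QQ)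
  also have "\<dots> \<le> (\<Sum>i<n. 1)" unfolding mat_trace_def using Gc diag sum_mono[of "{..<n}" "\<lambda>i. G $$ (i,i)" "\<lambda>_. 1"] by simp
  finally have trace: "(\<Sum>i<n. \<mu> i - 1) \<le> 0" by (simp add: sum_subtractf)
  \<comment> \<open>AM--GM for the eigenvalues, in the form \<open>\<mu> \<le> exp (\<mu> - 1)\<close>\<close>
  have "det G = (\<Prod>i<n. \<mu> i)" by (rule det_orthogonally_diagonalizes[OF Q\<mu>])
  also have "\<dots> \<le> (\<Prod>i<n. exp (\<mu> i - 1))"
    using pos_semidef_eigenvalues_nonneg[OF G Q\<mu>]
    by (intro prod_mono) (auto, metis add.commute diff_add_cancel exp_ge_add_one_self)
  also have "\<dots> = exp (\<Sum>i<n. \<mu> i - 1)" by (simp add: exp_sum)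
  also have "\<dots> \<le> 1" using trace by simp
  finally show ?thesis .
qed

section \<open>The determinant of \<open>C\<^sup>T diag(\<nu>) C\<close>\<close>

lemma sorted_prod_take_le_prod_submset:
  fixes ys :: "real list"
  assumes "sorted ys" "\<forall>y\<in>set ys. y > 0" "M \<subseteq># mset ys" "size M = j"
  shows "prod_list (take j ys) \<le> prod_mset M"
  using assms
proof (induction ys arbitrary: M j)
  case Nil
  then show ?case by simp
next
  case (Cons y ys M j)
  have sorted: "sorted ys" and y_le: "\<forall>z\<in>set ys. y \<le> z" using Cons.prems(1) by auto
  have pos: "\<forall>z\<in>set ys. z > 0" and y_pos: "y > 0" using Cons.prems(2) by auto
  show ?case
  proof (cases j)
    case 0
    then show ?thesis using Cons.prems(4) by simp
  next
    case (Suc j')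
    show ?thesis
    proof (cases "y \<in># M")
      case True
      define M' where "M' = M - {#y#}"
      have M: "M = add_mset y M'" unfolding M'_def using True by simp
      have "M' \<subseteq># mset ys" "size M' = j'" using Cons.prems(3,4) unfolding M Suc by simp_all
      then have "prod_list (take j' ys) \<le> prod_mset M'" using Cons.IH[OF sorted pos] by blast
      then show ?thesis unfolding M Suc using y_pos by simp
    next
      case False
      \<comment> \<open>then \<open>M\<close> lies in \<open>ys\<close>; trade the head \<open>y\<close> for the larger \<open>ys ! j'\<close>\<close>
      have M_sub: "M \<subseteq># mset ys"
      proof (rule mset_subset_eqI)
        fix x
        have "count M x \<le> count (mset (y # ys)) x" using Cons.prems(3) by (rule mset_subset_eq_count)
        then show "count M x \<le> count (mset ys) x" using False by (cases "x = y") (auto simp: not_in_iff)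
      qed
      have j': "j' < length ys" using size_mset_mono[OF M_sub] Cons.prems(4) Suc by simp
      have "prod_list (take j (y # ys)) = y * prod_list (take j' ys)" unfolding Suc by simp
      also have "\<dots> \<le> ys ! j' * prod_list (take j' ys)"
        using y_le j' pos by (intro mult_right_mono prod_list_nonneg) (auto dest: in_set_takeD intro: less_imp_le)
      also have "\<dots> = prod_list (take j ys)" unfolding Suc using j' by (simp add: take_Suc_conv_app_nth)
      also have "\<dots> \<le> prod_mset M" using Cons.IH[OF sorted pos M_sub Cons.prems(4)] .
      finally show ?thesis .
    qed
  qed
qed

lemma prod_smallest_le_prod_subset:
  fixes \<mu> :: "nat \<Rightarrow> real"
  assumes pos: "\<And>i. i < d \<Longrightarrow> \<mu> i > 0" and T: "T \<subseteq> {0..<d}" "card T = j"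
  shows "(\<Prod>k<j. sort (map \<mu> [0..<d]) ! k) \<le> (\<Prod>t\<in>T. \<mu> t)"
proof -
  let ?ys = "sort (map \<mu> [0..<d])"
  have "j \<le> d" using T card_mono[OF _ T(1)] by fastforce
  then have "(\<Prod>k<j. ?ys ! k) = prod_list (take j ?ys)"
    by (simp add: prod.list_conv_set_nth atLeast0LessThan min_def)
  also have "\<dots> \<le> prod_mset (image_mset \<mu> (mset_set T))"
  proof (rule sorted_prod_take_le_prod_submset)
    show "\<forall>y\<in>set ?ys. y > 0" using pos by auto
    have "mset_set T \<subseteq># mset_set {0..<d}" using T by (intro subset_imp_msubset_mset_set) auto
    then show "image_mset \<mu> (mset_set T) \<subseteq># mset ?ys" by (simp add: image_mset_subseteq_mono)
    show "size (image_mset \<mu> (mset_set T)) = j" using T by simp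
  qed simp
  also have "\<dots> = (\<Prod>t\<in>T. \<mu> t)" by (simp add: prod_unfold_prod_mset)
  finally show ?thesis .
qed

definition index_maps :: "nat \<Rightarrow> nat \<Rightarrow> (nat \<Rightarrow> nat) set" where
  "index_maps d j = {f. (\<forall>i\<in>{0..<j}. f i \<in> {0..<d}) \<and> (\<forall>i. i \<notin> {0..<j} \<longrightarrow> f i = i)}"

lemma finite_index_maps: "finite (index_maps d j)"
  unfolding index_maps_def by (rule finite_bounded_functions) auto

lemma det_mult_expand_rows:
  fixes A B :: "'a :: comm_ring_1 mat"
  assumes A: "A \<in> carrier_mat j d" and B: "B \<in> carrier_mat d j"
  shows "det (A * B) =
    (\<Sum>f\<in>index_maps d j. (\<Prod>i\<in>{0..<j}. A $$ (i, f i)) * det (mat\<^sub>r j j (\<lambda>i. row B (f i))))"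
proof -
  have "det (A * B) = (\<Sum>f\<in>index_maps d j. det (mat\<^sub>r j j (\<lambda>i. A $$ (i, f i) \<cdot>\<^sub>v row B (f i))))"
    unfolding mat_mul_finsum_alt[OF A B] index_maps_def
    by (rule det_linear_rows_sum[of "{0..<d}"]) (use A B in auto)
  also have "\<dots> = (\<Sum>f\<in>index_maps d j. (\<Prod>i\<in>{0..<j}. A $$ (i, f i)) * det (mat\<^sub>r j j (\<lambda>i. row B (f i))))"
    by (rule sum.cong[OF refl], rule det_rows_mul) (use B in auto)
  finally show ?thesis .
qed

definition row_selection_term :: "real mat \<Rightarrow> nat \<Rightarrow> (nat \<Rightarrow> nat) \<Rightarrow> real" where
  "row_selection_term C j f = (\<Prod>i\<in>{0..<j}. C $$ (f i, i)) * det (mat\<^sub>r j j (\<lambda>i. row C (f i)))"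

lemma row_selection_term_not_inj:
  assumes "C \<in> carrier_mat d j" and "\<not> inj_on f {0..<j}"
  shows "row_selection_term C j f = 0"
proof -
  from assms(2) obtain a b where ab: "a < j" "b < j" "a \<noteq> b" "f a = f b" unfolding inj_on_def by auto
  have "row (mat\<^sub>r j j (\<lambda>i. row C (f i))) a = row (mat\<^sub>r j j (\<lambda>i. row C (f i))) b"
    using ab assms(1) by simp
  then have "det (mat\<^sub>r j j (\<lambda>i. row C (f i))) = 0"
    using det_identical_rows[of "mat\<^sub>r j j (\<lambda>i. row C (f i))" j a b] ab by simp
  then show ?thesis unfolding row_selection_term_def by simp
qed

lemma det_congruence_mat_diag_index_maps:
  assumes C: "C \<in> carrier_mat d j"
  shows "det (transpose_mat C * mat_diag d \<nu> * C) =
    (\<Sum>f\<in>index_maps d j. (\<Prod>i\<in>{0..<j}. \<nu> (f i)) * row_selection_term C j f)"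
proof -
  have CD: "transpose_mat C * mat_diag d \<nu> \<in> carrier_mat j d" using C by simp
  have entry: "(transpose_mat C * mat_diag d \<nu>) $$ (i, r) = \<nu> r * C $$ (r, i)" if "i < j" "r < d" for i r
    using C that by (simp add: mat_diag_mult_right[of _ j d])
  show ?thesis unfolding det_mult_expand_rows[OF CD C] row_selection_term_def
    by (rule sum.cong[OF refl])
      (auto simp: index_maps_def entry prod.distrib mult.assoc intro!: prod.cong arg_cong2[where f = "(*)"])
qed

definition card_subsets :: "nat \<Rightarrow> nat \<Rightarrow> nat set set" where
  "card_subsets d j = {T. T \<subseteq> {0..<d} \<and> card T = j}"

lemma finite_card_subsets: "finite (card_subsets d j)"
  unfolding card_subsets_def by (rule finite_subset[of _ "Pow {0..<d}"]) auto

definition subset_weight :: "real mat \<Rightarrow> nat \<Rightarrow> nat \<Rightarrow> nat set \<Rightarrow> real" where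
  "subset_weight C d j T =
    (\<Sum>f\<in>{f\<in>index_maps d j. inj_on f {0..<j} \<and> f ` {0..<j} = T}. row_selection_term C j f)"

text \<open>This is the Cauchy--Binet expansion; \<open>subset_weight C d j T\<close> is in fact the square of the
  \<open>T\<close>-rows minor of \<open>C\<close>, but only its nonnegativity is needed below.\<close>

lemma det_congruence_mat_diag:
  assumes C: "C \<in> carrier_mat d j"
  shows "det (transpose_mat C * mat_diag d \<nu> * C) =
    (\<Sum>T\<in>card_subsets d j. (\<Prod>t\<in>T. \<nu> t) * subset_weight C d j T)"
proof -
  let ?F = "{f\<in>index_maps d j. inj_on f {0..<j}}"
  have fin: "finite ?F" using finite_index_maps by simp
  let ?g = "\<lambda>f. (\<Prod>i\<in>{0..<j}. \<nu> (f i)) * row_selection_term C j f"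
  have "det (transpose_mat C * mat_diag d \<nu> * C) = (\<Sum>f\<in>index_maps d j. ?g f)"
    by (rule det_congruence_mat_diag_index_maps[OF C])
  also have "\<dots> = (\<Sum>f\<in>?F. ?g f)"
    by (rule sum.mono_neutral_right[OF finite_index_maps]) (auto simp: row_selection_term_not_inj[OF C])
  also have "\<dots> = (\<Sum>T\<in>card_subsets d j. \<Sum>f\<in>{f\<in>?F. f ` {0..<j} = T}. ?g f)"
    by (rule sum.group[symmetric, OF fin finite_card_subsets])
      (auto simp: finite_index_maps finite_card_subsets card_subsets_def index_maps_def card_image)
  also have "\<dots> = (\<Sum>T\<in>card_subsets d j. (\<Prod>t\<in>T. \<nu> t) * subset_weight C d j T)"
  proof -
    have "(\<Prod>i\<in>{0..<j}. \<nu> (f i)) = (\<Prod>t\<in>f ` {0..<j}. \<nu> t)" if "f \<in> ?F" for f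
      using that prod.reindex[of f "{0..<j}" \<nu>] by simp
    then show ?thesis unfolding subset_weight_def sum_distrib_left by (intro sum.cong refl) auto
  qed
  finally show ?thesis .
qed

lemma subset_weight_nonneg:
  assumes C: "C \<in> carrier_mat d j" and T: "T \<in> card_subsets d j"
  shows "subset_weight C d j T \<ge> 0"
proof -
  \<comment> \<open>with \<open>\<nu>\<close> the indicator of \<open>T\<close> only the term of \<open>T\<close> survives in the expansion\<close>
  define \<nu> where "\<nu> = (\<lambda>t. if t \<in> T then 1 else (0::real))"
  have fin: "finite T'" if "T' \<in> card_subsets d j" for T'
    using that unfolding card_subsets_def by (auto intro: finite_subset)
  have "(\<Prod>t\<in>T'. \<nu> t) = (if T' = T then 1 else 0)" if T': "T' \<in> card_subsets d j" for T'
  proof (cases "T' \<subseteq> T")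
    case True
    then have "T' = T" using card_subset_eq[OF fin[OF T]] T T' unfolding card_subsets_def by auto
    then show ?thesis by (simp add: \<nu>_def)
  next
    case False
    then show ?thesis using fin[OF T'] unfolding \<nu>_def by (auto intro: prod_zero)
  qed
  then have "det (transpose_mat C * mat_diag d \<nu> * C) =
      (\<Sum>T'\<in>card_subsets d j. if T' = T then subset_weight C d j T' else 0)"
    unfolding det_congruence_mat_diag[OF C] by (intro sum.cong) auto
  also have "\<dots> = subset_weight C d j T" using T finite_card_subsets by simp
  finally have "det (transpose_mat C * mat_diag d \<nu> * C) = subset_weight C d j T" .
  moreover have "pos_semidef d (mat_diag d \<nu>)" by (rule pos_semidef_mat_diag) (simp add: \<nu>_def)
  ultimately show ?thesis using pos_semidef_det_nonneg pos_semidef_congruence C by metis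
qed

lemma det_congruence_mat_diag_ge:
  fixes C :: "real mat"
  assumes C: "C \<in> carrier_mat d j" and pos: "\<And>i. i < d \<Longrightarrow> \<mu> i > 0"
  shows "(\<Prod>k<j. sort (map \<mu> [0..<d]) ! k) * det (transpose_mat C * C)
    \<le> det (transpose_mat C * mat_diag d \<mu> * C)"
proof -
  let ?P = "\<Prod>k<j. sort (map \<mu> [0..<d]) ! k"
  have "det (transpose_mat C * C) = det (transpose_mat C * mat_diag d (\<lambda>_. 1) * C)" using C by simp
  then have "?P * det (transpose_mat C * C) = (\<Sum>T\<in>card_subsets d j. ?P * subset_weight C d j T)"
    unfolding det_congruence_mat_diag[OF C] by (simp add: sum_distrib_left)
  also have "\<dots> \<le> (\<Sum>T\<in>card_subsets d j. (\<Prod>t\<in>T. \<mu> t) * subset_weight C d j T)"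
    using subset_weight_nonneg[OF C] prod_smallest_le_prod_subset[OF pos]
    by (intro sum_mono mult_right_mono) (auto simp: card_subsets_def)
  also have "\<dots> = det (transpose_mat C * mat_diag d \<mu> * C)" unfolding det_congruence_mat_diag[OF C] ..
  finally show ?thesis .
qed

section \<open>Principal minors\<close>

lemma col_submatrix_UNIV:
  assumes "k < card {j. j < dim_col V \<and> j \<in> S}"
  shows "col (submatrix V UNIV S) k = col V (pick S k)"
  using assms pick_le[OF assms]
  by (intro eq_vecI) (auto simp: dim_submatrix submatrix_index pick_UNIV)

lemma submatrix_gram:
  fixes V :: "'a :: comm_semiring_0 mat"
  shows "submatrix (transpose_mat V * V) S S = transpose_mat (submatrix V UNIV S) * submatrix V UNIV S"
proof (rule eq_matI)
  let ?k = "card {j. j < dim_col V \<and> j \<in> S}"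
  fix a b assume "a < dim_row (transpose_mat (submatrix V UNIV S) * submatrix V UNIV S)"
    "b < dim_col (transpose_mat (submatrix V UNIV S) * submatrix V UNIV S)"
  then have a: "a < ?k" and b: "b < ?k" by (auto simp: dim_submatrix)
  then show "submatrix (transpose_mat V * V) S S $$ (a, b) =
      (transpose_mat (submatrix V UNIV S) * submatrix V UNIV S) $$ (a, b)"
    using pick_le[OF a] pick_le[OF b]
    by (simp add: submatrix_index dim_submatrix col_submatrix_UNIV)
qed (auto simp: dim_submatrix)

lemma det_congruence_ge_prod_smallest:
  fixes W B :: "real mat"
  assumes Q\<mu>: "orthogonally_diagonalizes d Q \<mu> W" and pos: "\<And>i. i < d \<Longrightarrow> \<mu> i > 0"
    and B: "B \<in> carrier_mat d j"
  shows "(\<Prod>k<j. sort (map \<mu> [0..<d]) ! k) * det (transpose_mat B * B) \<le> det (transpose_mat B * W * B)"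
proof -
  have Q: "Q \<in> carrier_mat d d" and QQ: "Q * transpose_mat Q = 1\<^sub>m d"
    and W: "W = Q * mat_diag d \<mu> * transpose_mat Q"
    using Q\<mu> unfolding orthogonally_diagonalizes_def by auto
  define C where "C = transpose_mat Q * B"
  have tQ: "transpose_mat Q \<in> carrier_mat d d" and tB: "transpose_mat B \<in> carrier_mat j d"
    using Q B by auto
  have C: "C \<in> carrier_mat d j" unfolding C_def using Q B by simp
  have tC: "transpose_mat C = transpose_mat B * Q"
    unfolding C_def using transpose_mult[OF tQ B] by simp
  have "transpose_mat C * C = transpose_mat B * (Q * transpose_mat Q) * B"
    unfolding tC unfolding C_def using tB Q tQ B by (simp add: assoc_mult_mat_dim)
  then have "transpose_mat C * C = transpose_mat B * B" unfolding QQ using B by simp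
  moreover have "transpose_mat C * mat_diag d \<mu> * C = transpose_mat B * W * B"
    unfolding tC W unfolding C_def using tB Q tQ B by (simp add: assoc_mult_mat_dim)
  moreover have "(\<Prod>k<j. sort (map \<mu> [0..<d]) ! k) * det (transpose_mat C * C)
      \<le> det (transpose_mat C * mat_diag d \<mu> * C)"
    by (rule det_congruence_mat_diag_ge[OF C]) (rule pos)
  ultimately show ?thesis by simp
qed

lemma exp_Delta_orthogonally_diagonalizes:
  assumes Q\<mu>: "orthogonally_diagonalizes d Q \<mu> W" and W: "W \<in> carrier_mat d d"
    and pos: "\<And>i. i < d \<Longrightarrow> \<mu> i > 0" and "j \<le> d"
  shows "exp (Delta j W) = 1 / (\<Prod>k<j. sort (map \<mu> [0..<d]) ! k)"
proof -
  let ?ys = "sort (map \<mu> [0..<d])"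
  have "?ys ! k > 0" if "k < j" for k
    using pos nth_mem[of k ?ys] that \<open>j \<le> d\<close> by auto
  then have "(\<Prod>k<j. exp (ln (?ys ! k))) = (\<Prod>k<j. ?ys ! k)" by (intro prod.cong) auto
  then show ?thesis
    unfolding Delta_def eigvals_sorted_orthogonally_diagonalizes[OF Q\<mu> W]
    by (simp add: exp_minus exp_sum field_simps)
qed

lemma principal_minor_le_exp_Delta:
  fixes V W :: "real mat"
  assumes V: "V \<in> carrier_mat d n" and W: "pos_def d W"
    and feasible: "\<forall>i<n. col V i \<bullet> (W *\<^sub>v col V i) \<le> 1"
    and S: "S \<subseteq> {..<n}" "card S = j" and "j \<le> d"
  shows "det (submatrix (transpose_mat V * V) S S) \<le> exp (Delta j W)"
proof -
  have Wc: "W \<in> carrier_mat d d" and "transpose_mat W = W" using W unfolding pos_def_def by auto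
  then obtain Q \<mu> where Q\<mu>: "orthogonally_diagonalizes d Q \<mu> W"
    using real_symmetric_orthogonally_diagonalizable by blast
  have pos: "\<mu> i > 0" if "i < d" for i using pos_def_eigenvalues_pos[OF W Q\<mu> that] .
  define P where "P = (\<Prod>k<j. sort (map \<mu> [0..<d]) ! k)"
  define B where "B = submatrix V UNIV S"
  have "{i. i < n \<and> i \<in> S} = S" using S by auto
  then have cardS: "card {i. i < dim_col V \<and> i \<in> S} = j" using V S by simp
  have B: "B \<in> carrier_mat d j" unfolding B_def carrier_mat_def using V cardS by (simp add: dim_submatrix)
  have "P * det (transpose_mat B * B) \<le> det (transpose_mat B * W * B)"
    unfolding P_def by (rule det_congruence_ge_prod_smallest[OF Q\<mu> pos B])
  also have "det (transpose_mat B * W * B) \<le> 1"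
  proof (rule pos_semidef_det_le_one)
    show "pos_semidef j (transpose_mat B * W * B)"
      by (rule pos_semidef_congruence[OF pos_def_imp_pos_semidef[OF W] B])
    fix k assume k: "k < j"
    have "pick S k < n" using pick_le[of k n S] k cardS V by simp
    then show "(transpose_mat B * W * B) $$ (k,k) \<le> 1"
      using feasible Wc B k cardS
      by (simp add: assoc_mult_mat_dim mult_mat_vec_def B_def col_submatrix_UNIV)
  qed
  finally have "P * det (submatrix (transpose_mat V * V) S S) \<le> 1"
    unfolding B_def submatrix_gram .
  moreover have exp_Delta: "exp (Delta j W) = 1 / P"
    unfolding P_def by (rule exp_Delta_orthogonally_diagonalizes[OF Q\<mu> Wc pos \<open>j \<le> d\<close>])
  moreover have "P > 0" using exp_gt_zero[of "Delta j W"] exp_Delta by simp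
  ultimately show ?thesis by (simp add: le_divide_eq mult.commute)
qed

lemma exists_pos_def_feasible:
  fixes V :: "real mat"
  assumes V: "V \<in> carrier_mat d n"
  shows "\<exists>W. pos_def d W \<and> (\<forall>i<n. col V i \<bullet> (W *\<^sub>v col V i) \<le> 1)"
proof -
  define \<epsilon> where "\<epsilon> = 1 / (1 + (\<Sum>i<n. col V i \<bullet> col V i))"
  have sq_nonneg: "x \<bullet> x \<ge> 0" for x :: "real vec" by (simp add: scalar_prod_def sum_nonneg)
  then have sum_nonneg: "(\<Sum>i<n. col V i \<bullet> col V i) \<ge> 0" by (simp add: sum_nonneg)
  then have \<epsilon>: "\<epsilon> > 0" unfolding \<epsilon>_def by simp
  have quad: "x \<bullet> (mat_diag d (\<lambda>_. \<epsilon>) *\<^sub>v x) = \<epsilon> * (x \<bullet> x)" if "x \<in> carrier_vec d" for x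
    unfolding quad_form_mat_diag[OF that] using that
    by (simp add: scalar_prod_def atLeast0LessThan sum_distrib_left power2_eq_square)
  show ?thesis
  proof (intro exI conjI allI impI)
    show "pos_def d (mat_diag d (\<lambda>_. \<epsilon>))"
      unfolding pos_def_def using \<epsilon> by (auto simp: quad scalar_prod_self_pos)
    fix i assume i: "i < n"
    have "col V i \<bullet> col V i \<le> (\<Sum>i<n. col V i \<bullet> col V i)"
      using i sq_nonneg by (intro member_le_sum) auto
    moreover have "col V i \<in> carrier_vec d" using V by (simp add: carrier_vecI)
    ultimately show "col V i \<bullet> (mat_diag d (\<lambda>_. \<epsilon>) *\<^sub>v col V i) \<le> 1"
      unfolding quad[OF \<open>col V i \<in> carrier_vec d\<close>] unfolding \<epsilon>_def
      using sum_nonneg by (simp add: field_simps)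
  qed
qed

lemma le_exp_Inf:
  fixes a :: real
  assumes "X \<noteq> {}" and "\<And>x. x \<in> X \<Longrightarrow> a \<le> exp x"
  shows "a \<le> exp (Inf X)"
proof (cases "a > 0")
  case True
  have "ln a \<le> x" if "x \<in> X" for x
    using True assms(2)[OF that] by (metis exp_gt_zero ln_exp ln_le_cancel_iff)
  then have "ln a \<le> Inf X" using assms(1) by (intro cInf_greatest)
  then show ?thesis using True by (metis exp_le_cancel_iff exp_ln)
qed (use exp_gt_zero[of "Inf X"] in linarith)

lemma msd_le:
  assumes "j \<le> dim_row M" and "\<And>S. S \<subseteq> {..<dim_row M} \<Longrightarrow> card S = j \<Longrightarrow> det (submatrix M S S) \<le> b"
  shows "msd j M \<le> b"
proof -
  have "{det (submatrix M S S) | S. S \<subseteq> {..<dim_row M} \<and> card S = j}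
      = (\<lambda>S. det (submatrix M S S)) ` {S. S \<subseteq> {..<dim_row M} \<and> card S = j}" by blast
  moreover have "finite {S. S \<subseteq> {..<dim_row M} \<and> card S = j}" by (simp add: finite_subset[of _ "Pow _"])
  moreover have "{..<j} \<in> {S. S \<subseteq> {..<dim_row M} \<and> card S = j}" using assms(1) by auto
  then have "(\<lambda>S. det (submatrix M S S)) ` {S. S \<subseteq> {..<dim_row M} \<and> card S = j} \<noteq> {}" by blast
  ultimately show ?thesis unfolding msd_def using assms(2) by (intro Max.boundedI) auto
qed

theorem lemma4p2:
  fixes V :: "real mat" and d n j :: nat
  assumes "V \<in> carrier_mat d n"
    and "vec_space.rank n (transpose_mat V * V) = d"
    and "1 \<le> j" and "j \<le> d"
  shows "msd j (transpose_mat V * V) \<le>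
           exp (Inf {Delta j W | W. pos_def d W \<and>
                       (\<forall>i<n. col V i \<bullet> (W *\<^sub>v col V i) \<le> 1)})"
proof (rule msd_le)
  \<comment> \<open>the rank hypothesis only serves to make \<open>j\<close>-subsets of the \<open>n\<close> columns exist\<close>
  have "d \<le> n" using vec_space.rank_le_nc[of "transpose_mat V * V" n] assms(1,2) by simp
  then show "j \<le> dim_row (transpose_mat V * V)" using assms(1,4) by simp
next
  fix S assume "S \<subseteq> {..<dim_row (transpose_mat V * V)}" "card S = j"
  then show "det (submatrix (transpose_mat V * V) S S) \<le> exp (Inf {Delta j W | W. pos_def d W \<and>
      (\<forall>i<n. col V i \<bullet> (W *\<^sub>v col V i) \<le> 1)})"
    using exists_pos_def_feasible[OF assms(1)] principal_minor_le_exp_Delta[OF assms(1) _ _ _ _ assms(4)]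
      assms(1) by (intro le_exp_Inf) auto
qed

end
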